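(* Let $n=3$ and $\tau=\tau_\mu\in\widehat{SO_3}$. Then $$\Phi^\tau_{\rho,2\mu-s}(y)=\Phi^\tau_{\rho,s}(-y)\qquad\forall y\in\mathbb R^3,\ \rho\ge0,\ s=0,\dots,2\mu,$$ so that if $F\in\mathcal S(\mathbb R^3,{\rm End}(V_\tau))^K$ is decomposed into its even part $F_+$ and odd part $F_-$, then $$\mathcal G^\sharp_\tau F_\pm(\rho^2,\lambda_{s,\tau}\rho)=\pm\mathcal G^\sharp_\tau F_\pm(\rho^2,-\lambda_{s,\tau}\rho)\qquad\forall\rho\ge0,\ s=0,\dots,2\mu.$$
   Context: $K=SO_3$ acts naturally on $\mathbb R^3$; $o=(1,0,0)$ with stabilizer $K_o\cong SO_2$. $\tau_\mu$ ($\mu\in\mathbb N$) is the irreducible representation of $SO_3$ of dimension $d_\tau=2\mu+1$ on $V_\tau=\bigoplus_{s=0}^{2\mu}U_s$, where $U_s$ is the line on which rotation of $K_o$ by angle $t$ acts by $e^{i(s-\mu)t}$; $P_{s,\tau}$ is the orthogonal projection onto $U_s$ and $\lambda_{s,\tau}=s-\mu$. $\mathcal S(\mathbb R^3,{\rm End}(V_\tau))^K$ is the space of Schwartz functions $F$ with $F(ky)=\tau(k)F(y)\tau(k)^{-1}$. The functions $\Phi^\tau_{\rho,s}(y)=d_\tau\int_Ke^{i\rho\,o\cdot(ky)}\tau(k^{-1})P_{s,\tau}\tau(k)\,dk$ are the ${\rm End}(V_\tau)$-valued spherical functions, and $\mathcal G^\sharp_\tau F(\rho^2,\lambda_{s,\tau}\rho)=\frac1{d_\tau}\int_{\mathbb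 R^3}{\rm tr}\big(F(y)\Phi^\tau_{\rho,s}(-y)\big)dy$ (note $-\lambda_{s,\tau}=\lambda_{2\mu-s,\tau}$). *)

theory Defs
  imports "HOL-Analysis.Analysis" "Jordan_Normal_Form.Schur_Decomposition"
begin

definition SO3 :: "(real^3^3) set" where
  "SO3 = {k. rotation_matrix k}"

definition pt_o :: "real^3" where
  "pt_o = axis 1 1"

text \<open>Rotations about the three coordinate axes. K_o (stabiliser of o) is
  the group of rotations rot_x t.\<close>
definition rot_x :: "real \<Rightarrow> real^3^3" where
  "rot_x t = vector [vector [1, 0, 0], vector [0, cos t, - sin t], vector [0, sin t, cos t]]"

definition rot_y :: "real \<Rightarrow> real^3^3" where
  "rot_y t = vector [vector [cos t, 0, sin t], vector [0, 1, 0], vector [- sin t, 0, cos t]]"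

text \<open>Normalised Haar integral on SO(3), written in (proper) Euler angles
  k = rot_x a * rot_y b * rot_x c, with Haar density sin b / (8 pi^2).\<close>
definition haar_SO3 :: "(real^3^3 \<Rightarrow> complex) \<Rightarrow> complex" where
  "haar_SO3 f = interval_lebesgue_integral lborel 0 (ereal (2*pi)) (\<lambda>a.
        interval_lebesgue_integral lborel 0 (ereal pi) (\<lambda>b.
        interval_lebesgue_integral lborel 0 (ereal (2*pi)) (\<lambda>c.
        complex_of_real (sin b / (8 * pi^2)) * f (rot_x a ** rot_y b ** rot_x c))))"

definition haar_SO3_mat :: "nat \<Rightarrow> (real^3^3 \<Rightarrow> complex mat) \<Rightarrow> complex mat" where
  "haar_SO3_mat d F = mat d d (\<lambda>(i,j). haar_SO3 (\<lambda>k. F k $$ (i,j)))"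

definition mtrace :: "complex mat \<Rightarrow> complex" where
  "mtrace A = (\<Sum>i<dim_row A. A $$ (i,i))"

definition unitary_mat :: "nat \<Rightarrow> complex mat \<Rightarrow> bool" where
  "unitary_mat d A \<longleftrightarrow> A \<in> carrier_mat d d \<and> A * mat_adjoint A = 1\<^sub>m d"

definition irreducible_rep :: "nat \<Rightarrow> (real^3^3 \<Rightarrow> complex mat) \<Rightarrow> bool" where
  "irreducible_rep d \<tau> \<longleftrightarrow>
     (\<forall>W. W \<subseteq> carrier_vec d \<and> 0\<^sub>v d \<in> W
          \<and> (\<forall>v\<in>W. \<forall>w\<in>W. v + w \<in> W) \<and> (\<forall>c. \<forall>v\<in>W. c \<cdot>\<^sub>v v \<in> W)
          \<and> (\<forall>k\<in>SO3. \<forall>v\<in>W. \<tau> k *\<^sub>v v \<in> W)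
        \<longrightarrow> W = {0\<^sub>v d} \<or> W = carrier_vec d)"

text \<open>tau is (a matrix model of) the irreducible representation tau_mu of SO(3):
  a continuous unitary irreducible representation of dimension 2 mu + 1 such that
  rotation of K_o by angle t acts on the line U_s = C e_s by e^(i(s-mu)t).\<close>
definition is_tau_mu :: "nat \<Rightarrow> (real^3^3 \<Rightarrow> complex mat) \<Rightarrow> bool" where
  "is_tau_mu \<mu> \<tau> \<longleftrightarrow>
     (let d = 2*\<mu>+1 in
       (\<forall>k\<in>SO3. unitary_mat d (\<tau> k))
     \<and> (\<forall>k\<in>SO3. \<forall>l\<in>SO3. \<tau> (k ** l) = \<tau> k * \<tau> l)
     \<and> (\<forall>i<d. \<forall>j<d. continuous_on SO3 (\<lambda>k. \<tau> k $$ (i,j)))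
     \<and> irreducible_rep d \<tau>
     \<and> (\<forall>t. \<tau> (rot_x t) = mat_diag d (\<lambda>s. exp (\<i> * of_int (int s - int \<mu>) * of_real t))))"

definition P_proj :: "nat \<Rightarrow> nat \<Rightarrow> complex mat" where
  "P_proj \<mu> s = mat_diag (2*\<mu>+1) (\<lambda>j. if j = s then 1 else 0)"

definition lambda_st :: "nat \<Rightarrow> nat \<Rightarrow> int" where
  "lambda_st \<mu> s = int s - int \<mu>"

definition Phi :: "nat \<Rightarrow> (real^3^3 \<Rightarrow> complex mat) \<Rightarrow> real \<Rightarrow> nat \<Rightarrow> real^3 \<Rightarrow> complex mat" where
  "Phi \<mu> \<tau> \<rho> s y = of_nat (2*\<mu>+1) \<cdot>\<^sub>m haar_SO3_mat (2*\<mu>+1)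
      (\<lambda>k. exp (\<i> * of_real (\<rho> * (pt_o \<bullet> (k *v y)))) \<cdot>\<^sub>m
           (\<tau> (matrix_inv k) * P_proj \<mu> s * \<tau> k))"

text \<open>G_sharp F evaluated at the point (rho^2, lambda_(s,tau) rho), as a function of (rho, s).\<close>
definition G_sharp :: "nat \<Rightarrow> (real^3^3 \<Rightarrow> complex mat) \<Rightarrow> (real^3 \<Rightarrow> complex mat) \<Rightarrow> real \<Rightarrow> nat \<Rightarrow> complex" where
  "G_sharp \<mu> \<tau> F \<rho> s = (1 / of_nat (2*\<mu>+1)) *
      (\<integral>y. mtrace (F y * Phi \<mu> \<tau> \<rho> s (- y)) \<partial>lborel)"

fun pderivs :: "3 list \<Rightarrow> (real^3 \<Rightarrow> complex) \<Rightarrow> real^3 \<Rightarrow> complex" where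
  "pderivs [] f = f"
| "pderivs (i # is) f = (\<lambda>x. vector_derivative (\<lambda>t. pderivs is f (x + t *\<^sub>R axis i 1)) (at 0))"

definition schwartz :: "(real^3 \<Rightarrow> complex) \<Rightarrow> bool" where
  "schwartz f \<longleftrightarrow>
     (\<forall>is. continuous_on UNIV (pderivs is f)
        \<and> (\<forall>i x. (\<lambda>t. pderivs is f (x + t *\<^sub>R axis i 1)) differentiable (at 0))
        \<and> (\<forall>N::nat. bounded (range (\<lambda>x. (1 + norm x) ^ N * norm (pderivs is f x)))))"

definition schwartz_K :: "nat \<Rightarrow> (real^3^3 \<Rightarrow> complex mat) \<Rightarrow> (real^3 \<Rightarrow> complex mat) set" where
  "schwartz_K \<mu> \<tau> = {F. (\<forall>y. F y \<in> carrier_mat (2*\<mu>+1) (2*\<mu>+1))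
      \<and> (\<forall>i<2*\<mu>+1. \<forall>j<2*\<mu>+1. schwartz (\<lambda>y. F y $$ (i,j)))
      \<and> (\<forall>k\<in>SO3. \<forall>y. F (k *v y) = \<tau> k * F y * \<tau> (matrix_inv k))}"

definition even_part :: "(real^3 \<Rightarrow> complex mat) \<Rightarrow> real^3 \<Rightarrow> complex mat" where
  "even_part F y = (1/2 :: complex) \<cdot>\<^sub>m (F y + F (- y))"

definition odd_part :: "(real^3 \<Rightarrow> complex mat) \<Rightarrow> real^3 \<Rightarrow> complex mat" where
  "odd_part F y = (1/2 :: complex) \<cdot>\<^sub>m (F y - F (- y))"

end

theory Submission
  imports Defs
begin

text \<open>The half-turn \<open>w\<close> about the third axis maps \<open>o\<close> to \<open>-o\<close> and normalises
  \<open>K\<^sub>o\<close>, acting on it by inversion. Hence \<open>\<tau>(w)\<close> exchanges the weight lines \<open>U\<^sub>s\<close>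
  and \<open>U\<^bsub>2\<mu>-s\<^esub>\<close>, i.e. \<open>\<tau>(w) P\<^sub>s \<tau>(w) = P\<^bsub>2\<mu>-s\<^esub>\<close>, and the substitution
  \<open>k \<mapsto> w k\<close> in the Haar integral defining \<open>\<Phi>\<^sub>\<rho>\<^sub>,\<^sub>s(-y)\<close> turns it into
  \<open>\<Phi>\<^sub>\<rho>\<^sub>,\<^bsub>2\<mu>-s\<^esub>(y)\<close>. The identities for \<open>G\<^sup>\<sharp>\<close> then follow from the change of
  variables \<open>y \<mapsto> -y\<close>, under which \<open>F\<^sub>\<plusminus>\<close> picks up the sign \<open>\<plusminus>1\<close>.\<close>

lemma set_integrable_Un_iff:
  fixes f :: "'a \<Rightarrow> 'b::{banach, second_countable_topology}"
  assumes "A \<in> sets M" "B \<in> sets M"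
  shows "set_integrable M (A \<union> B) f \<longleftrightarrow> set_integrable M A f \<and> set_integrable M B f"
  using assms by (meson Un_upper1 Un_upper2 set_integrable_Un set_integrable_subset sets.Un)

lemma lborel_set_integral_translate:
  fixes f :: "real \<Rightarrow> 'a::{banach, second_countable_topology}"
  shows "set_integrable lborel ((\<lambda>x. x + c) -` S) (\<lambda>x. f (x + c)) \<longleftrightarrow> set_integrable lborel S f"
    and "(LINT x:(\<lambda>x. x + c) -` S|lborel. f (x + c)) = (LINT x:S|lborel. f x)"
proof -
  have shift: "(\<lambda>x. indicator ((\<lambda>x. x + c) -` S) x *\<^sub>R f (x + c))
             = (\<lambda>x. (\<lambda>y. indicator S y *\<^sub>R f y) (c + 1 * x))"
    by (simp add: fun_eq_iff add.commute indicator_def)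
  show "set_integrable lborel ((\<lambda>x. x + c) -` S) (\<lambda>x. f (x + c)) \<longleftrightarrow> set_integrable lborel S f"
    unfolding set_integrable_def shift by (rule lborel_integrable_real_affine_iff) simp
  show "(LINT x:(\<lambda>x. x + c) -` S|lborel. f (x + c)) = (LINT x:S|lborel. f x)"
    unfolding set_lebesgue_integral_def shift
    using lborel_integral_real_affine[of 1 "\<lambda>y. indicator S y *\<^sub>R f y" c] by simp
qed

lemma set_integral_periodic_translate:
  fixes f :: "real \<Rightarrow> 'a::{banach, second_countable_topology}"
  assumes periodic: "\<And>x. f (x + p) = f x" and "0 \<le> a" "a \<le> p"
  shows "(LINT x:{a..<a + p}|lborel. f x) = (LINT x:{0..<p}|lborel. f x)"
proof -
  have wrap_preimage: "(\<lambda>x. x + p) -` {p..<a + p} = {0..<a}" by auto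
  have wrap_integrable: "set_integrable lborel {p..<a + p} f \<longleftrightarrow> set_integrable lborel {0..<a} f"
    using lborel_set_integral_translate(1)[of p "{p..<a + p}" f] unfolding wrap_preimage periodic by simp
  have wrap: "(LINT x:{p..<a + p}|lborel. f x) = (LINT x:{0..<a}|lborel. f x)"
    using lborel_set_integral_translate(2)[of p "{p..<a + p}" f] unfolding wrap_preimage periodic by simp
  have split_translated: "{a..<a + p} = {a..<p} \<union> {p..<a + p}" and split: "{0..<p} = {0..<a} \<union> {a..<p}"
    using assms by auto
  show ?thesis
  proof (cases "set_integrable lborel {0..<a} f \<and> set_integrable lborel {a..<p} f")
    case True
    then show ?thesis
      unfolding split_translated split by (simp add: set_integral_Un wrap wrap_integrable)
  next
    case False
    then have "\<not> set_integrable lborel {a..<a + p} f" "\<not> set_integrable lborel {0..<p} f"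
      unfolding split_translated split by (auto simp: set_integrable_Un_iff wrap_integrable)
    then show ?thesis
      by (simp add: set_integrable_def set_lebesgue_integral_def not_integrable_integral_eq)
  qed
qed

lemma interval_integral_eq_set_integral_Ico:
  fixes f :: "real \<Rightarrow> 'a::{banach, second_countable_topology}"
  assumes "0 \<le> p"
  shows "interval_lebesgue_integral lborel 0 (ereal p) f = (LINT x:{0..<p}|lborel. f x)"
proof -
  have "einterval 0 (ereal p) = {0<..<p}" by (auto simp: einterval_def zero_ereal_def)
  moreover have "(LINT x:{0<..<p}|lborel. f x) = (LINT x:{0..<p}|lborel. f x)"
    by (rule set_integral_discrete_difference[where X = "{0}"]) auto
  ultimately show ?thesis
    using assms by (simp add: interval_lebesgue_integral_def zero_ereal_def)
qed

lemma interval_integral_periodic_translate: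
  fixes f :: "real \<Rightarrow> 'a::{banach, second_countable_topology}"
  assumes periodic: "\<And>x. f (x + p) = f x" and "0 \<le> a" "a \<le> p"
  shows "interval_lebesgue_integral lborel 0 (ereal p) (\<lambda>x. f (x + a))
       = interval_lebesgue_integral lborel 0 (ereal p) f"
proof -
  have "(\<lambda>x. x + a) -` {a..<a + p} = {0..<p}" by auto
  then have "(LINT x:{0..<p}|lborel. f (x + a)) = (LINT x:{a..<a + p}|lborel. f x)"
    using lborel_set_integral_translate(2)[of a "{a..<a + p}" f] by simp
  then show ?thesis
    using assms set_integral_periodic_translate[of f p a]
    by (simp add: interval_integral_eq_set_integral_Ico)
qed

lemma interval_integral_reflect_endpoint:
  fixes f :: "real \<Rightarrow> 'a::{banach, second_countable_topology}"
  assumes "0 \<le> L"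
  shows "interval_lebesgue_integral lborel 0 (ereal L) (\<lambda>x. f (L - x))
       = interval_lebesgue_integral lborel 0 (ereal L) f"
proof -
  have "(\<lambda>x. (\<lambda>y. indicator {0..<L} y *\<^sub>R f y) (L + -1 * x)) = (\<lambda>x. indicator {0<..L} x *\<^sub>R f (L - x))"
    by (auto simp: fun_eq_iff split: split_indicator)
  then have "(LINT x:{0..<L}|lborel. f x) = (LINT x:{0<..L}|lborel. f (L - x))"
    using lborel_integral_real_affine[of "-1" "\<lambda>y. indicator {0..<L} y *\<^sub>R f y" L]
    by (simp add: set_lebesgue_integral_def)
  also have "\<dots> = (LINT x:{0..<L}|lborel. f (L - x))"
    by (rule set_integral_discrete_difference[where X = "{0, L}"]) auto
  finally show ?thesis
    using assms by (simp add: interval_integral_eq_set_integral_Ico)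
qed

lemma lborel_distr_uminus_euclidean: "distr lborel borel uminus = (lborel :: 'a::euclidean_space measure)"
  using lborel_affine[of "-1" "0 :: 'a"] by (simp add: density_1)

lemma lborel_integral_reflect:
  fixes f :: "'a::euclidean_space \<Rightarrow> 'b::{banach, second_countable_topology}"
  shows "(\<integral>x. f (- x) \<partial>lborel) = (\<integral>x. f x \<partial>lborel)"
proof -
  have reflect_integrable: "integrable lborel (\<lambda>x. g (- x))" if "integrable lborel g" for g :: "'a \<Rightarrow> 'b"
    using that integrable_distr_eq[of uminus lborel borel g]
    by (simp add: lborel_distr_uminus_euclidean borel_measurable_integrable)
  show ?thesis
  proof (rule integral_eq_cases)
    show "integrable lborel (\<lambda>x. f (- x)) \<longleftrightarrow> integrable lborel f"
      using reflect_integrable[of f] reflect_integrable[of "\<lambda>x. f (- x)"] by auto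
    show "(\<integral>x. f (- x) \<partial>lborel) = (\<integral>x. f x \<partial>lborel)" if "integrable lborel f"
      using integral_distr[of uminus lborel borel f] that
      by (simp add: lborel_distr_uminus_euclidean borel_measurable_integrable)
  qed
qed

lemma matrix_inv_orthogonal:
  fixes Q :: "real^'n^'n"
  assumes "orthogonal_matrix Q"
  shows "matrix_inv Q = transpose Q"
proof -
  have inverse: "Q ** transpose Q = Finite_Cartesian_Product.mat 1"
    "transpose Q ** Q = Finite_Cartesian_Product.mat 1"
    using assms by (auto simp: orthogonal_matrix_def)
  then have "\<exists>Q'. Q ** Q' = Finite_Cartesian_Product.mat 1 \<and> Q' ** Q = Finite_Cartesian_Product.mat 1"
    by blast
  then have left_inverse: "matrix_inv Q ** Q = Finite_Cartesian_Product.mat 1"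
    unfolding matrix_inv_def by (rule someI_ex[THEN conjunct2])
  have "matrix_inv Q = matrix_inv Q ** (Q ** transpose Q)"
    using inverse by simp
  also have "\<dots> = (matrix_inv Q ** Q) ** transpose Q"
    by (simp add: matrix_mul_assoc)
  finally show ?thesis
    using left_inverse by simp
qed

lemma SO3_mult: "k \<in> SO3 \<Longrightarrow> l \<in> SO3 \<Longrightarrow> k ** l \<in> SO3"
  unfolding SO3_def rotation_matrix_def by (simp add: orthogonal_matrix_mul det_mul)

lemma SO3_matrix_inv: "k \<in> SO3 \<Longrightarrow> matrix_inv k = transpose k"
  unfolding SO3_def rotation_matrix_def by (simp add: matrix_inv_orthogonal)

lemma SO3_transpose: "k \<in> SO3 \<Longrightarrow> transpose k \<in> SO3"
  unfolding SO3_def rotation_matrix_def by (simp add: det_transpose)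

lemma rot_x_SO3: "rot_x t \<in> SO3"
  unfolding SO3_def rotation_matrix_def orthogonal_matrix rot_x_def
  by (simp add: Finite_Cartesian_Product.vec_eq_iff forall_3 Finite_Cartesian_Product.mat_def matrix_matrix_mult_def
      sum_3 transpose_def det_3 flip: power2_eq_square)

lemma rot_y_SO3: "rot_y t \<in> SO3"
  unfolding SO3_def rotation_matrix_def orthogonal_matrix rot_y_def
  by (simp add: Finite_Cartesian_Product.vec_eq_iff forall_3 Finite_Cartesian_Product.mat_def matrix_matrix_mult_def
      sum_3 transpose_def det_3 flip: power2_eq_square)

lemma rot_x_add_2pi: "rot_x (t + 2 * pi) = rot_x t"
  unfolding rot_x_def by (simp add: sin_add cos_add)

lemma haar_SO3_cong: "(\<And>k. k \<in> SO3 \<Longrightarrow> f k = g k) \<Longrightarrow> haar_SO3 f = haar_SO3 g"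
  unfolding haar_SO3_def by (simp add: SO3_mult rot_x_SO3 rot_y_SO3)

definition half_turn_z :: "real^3^3" where
  "half_turn_z = vector [vector [-1, 0, 0], vector [0, -1, 0], vector [0, 0, 1]]"

lemma half_turn_z_SO3: "half_turn_z \<in> SO3"
  unfolding SO3_def rotation_matrix_def orthogonal_matrix half_turn_z_def
  by (simp add: Finite_Cartesian_Product.vec_eq_iff forall_3 Finite_Cartesian_Product.mat_def matrix_matrix_mult_def
      sum_3 transpose_def det_3)

lemma transpose_half_turn_z: "transpose half_turn_z = half_turn_z"
  unfolding half_turn_z_def by (simp add: Finite_Cartesian_Product.vec_eq_iff forall_3 transpose_def)

lemma half_turn_z_squared: "half_turn_z ** half_turn_z = rot_x 0"
  unfolding half_turn_z_def rot_x_def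
  by (simp add: Finite_Cartesian_Product.vec_eq_iff forall_3 matrix_matrix_mult_def sum_3)

lemma half_turn_z_rot_x: "half_turn_z ** rot_x t = rot_x (- t) ** half_turn_z"
  unfolding half_turn_z_def rot_x_def
  by (simp add: Finite_Cartesian_Product.vec_eq_iff forall_3 matrix_matrix_mult_def sum_3)

lemma pt_o_half_turn_z: "pt_o \<bullet> (half_turn_z *v z) = - (pt_o \<bullet> z)"
  unfolding pt_o_def half_turn_z_def by (simp add: inner_vec_def sum_3 matrix_vector_mult_def axis_def)

lemma half_turn_z_euler:
  "half_turn_z ** (rot_x a ** rot_y b ** rot_x c)
     = rot_x (2 * pi - a) ** rot_y (pi - b) ** rot_x (c + pi)"
  unfolding half_turn_z_def rot_x_def rot_y_def
  by (simp add: Finite_Cartesian_Product.vec_eq_iff forall_3 matrix_matrix_mult_def sum_3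
      sin_diff cos_diff sin_add cos_add algebra_simps)

text \<open>In Euler angles the left translation by the half-turn is
  \<open>(a, b, c) \<mapsto> (2\<pi> - a, \<pi> - b, c + \<pi>)\<close>: two reflections of the parameter intervals,
  which preserve the density \<open>sin b\<close>, and a translation by half a period.\<close>
lemma haar_SO3_left_half_turn: "haar_SO3 (\<lambda>k. f (half_turn_z ** k)) = haar_SO3 f"
proof -
  let ?I = "\<lambda>L. interval_lebesgue_integral lborel 0 (ereal L)"
  define g where "g a b c = complex_of_real (sin b / (8 * pi^2)) * f (rot_x a ** rot_y b ** rot_x c)"
    for a b c
  have translated: "?I (2 * pi) (\<lambda>c. g a b (c + pi)) = ?I (2 * pi) (g a b)" for a b
    by (rule interval_integral_periodic_translate) (simp_all add: g_def rot_x_add_2pi)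
  have reflected: "?I pi (\<lambda>b. ?I (2 * pi) (g a (pi - b))) = ?I pi (\<lambda>b. ?I (2 * pi) (g a b))" for a
    by (rule interval_integral_reflect_endpoint[of pi "\<lambda>b. ?I (2 * pi) (g a b)"]) simp
  have "haar_SO3 (\<lambda>k. f (half_turn_z ** k))
      = ?I (2 * pi) (\<lambda>a. ?I pi (\<lambda>b. ?I (2 * pi) (\<lambda>c. g (2 * pi - a) (pi - b) (c + pi))))"
    by (simp add: haar_SO3_def half_turn_z_euler g_def)
  also have "\<dots> = ?I (2 * pi) (\<lambda>a. ?I pi (\<lambda>b. ?I (2 * pi) (g (2 * pi - a) (pi - b))))"
    by (simp only: translated)
  also have "\<dots> = ?I (2 * pi) (\<lambda>a. ?I pi (\<lambda>b. ?I (2 * pi) (g (2 * pi - a) b)))"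
    by (simp only: reflected)
  also have "\<dots> = ?I (2 * pi) (\<lambda>a. ?I pi (\<lambda>b. ?I (2 * pi) (g a b)))"
    by (rule interval_integral_reflect_endpoint[of "2 * pi" "\<lambda>a. ?I pi (\<lambda>b. ?I (2 * pi) (g a b))"]) simp
  also have "\<dots> = haar_SO3 f"
    unfolding haar_SO3_def g_def ..
  finally show ?thesis .
qed

lemma mtrace_smult_mat: "A \<in> carrier_mat n n \<Longrightarrow> mtrace (c \<cdot>\<^sub>m A) = c * mtrace A"
  by (simp add: mtrace_def sum_distrib_left)

lemma Phi_carrier: "Phi \<mu> \<tau> \<rho> s y \<in> carrier_mat (2*\<mu>+1) (2*\<mu>+1)"
  unfolding Phi_def haar_SO3_mat_def by simp

lemma G_sharp_smult:
  assumes "\<And>y. H y \<in> carrier_mat (2*\<mu>+1) (2*\<mu>+1)"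
  shows "G_sharp \<mu> \<tau> (\<lambda>y. c \<cdot>\<^sub>m H y) \<rho> s = c * G_sharp \<mu> \<tau> H \<rho> s"
proof -
  have "mtrace ((c \<cdot>\<^sub>m H y) * Phi \<mu> \<tau> \<rho> s (- y)) = c * mtrace (H y * Phi \<mu> \<tau> \<rho> s (- y))" for y
    using assms[of y] Phi_carrier[of \<mu> \<tau> \<rho> s "- y"]
    by (simp add: mult_smult_assoc_mat mtrace_smult_mat[of _ "2*\<mu>+1"])
  then show ?thesis
    by (simp add: G_sharp_def)
qed

lemma even_part_reflect:
  assumes "\<And>y. F y \<in> carrier_mat n m"
  shows "(\<lambda>y. even_part F (- y)) = even_part F"
  using assms by (simp add: fun_eq_iff even_part_def comm_add_mat[of _ n m])

lemma odd_part_reflect: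
  assumes "\<And>y. F y \<in> carrier_mat n m"
  shows "(\<lambda>y. odd_part F (- y)) = (\<lambda>y. (-1) \<cdot>\<^sub>m odd_part F y)"
proof -
  have dim: "dim_row (F y) = n" "dim_col (F y) = m" for y
    using assms[of y] by auto
  show ?thesis
  proof (intro ext eq_matI)
    fix y i j assume "i < dim_row (-1 \<cdot>\<^sub>m odd_part F y)" "j < dim_col (-1 \<cdot>\<^sub>m odd_part F y)"
    then show "odd_part F (- y) $$ (i, j) = (-1 \<cdot>\<^sub>m odd_part F y) $$ (i, j)"
      by (simp add: odd_part_def dim)
  qed (simp_all add: odd_part_def dim)
qed

lemma exp_ii_fixed_multiplier_eq_0:
  assumes fixed: "\<And>t::real. c * exp (\<i> * of_int m * of_real t) = c" and "m \<noteq> 0"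
  shows "c = (0::complex)"
proof -
  have "\<i> * of_int m * of_real (pi / m) = pi * \<i>"
    using \<open>m \<noteq> 0\<close> by (simp add: field_simps)
  then have "- c = c"
    using fixed[of "pi / m"] by simp
  then show ?thesis by simp
qed

context
  fixes \<mu> :: nat and \<tau> :: "real^3^3 \<Rightarrow> complex mat"
  assumes tau: "is_tau_mu \<mu> \<tau>"
begin

lemma tau_carrier: "k \<in> SO3 \<Longrightarrow> \<tau> k \<in> carrier_mat (2*\<mu>+1) (2*\<mu>+1)"
  and tau_mult: "k \<in> SO3 \<Longrightarrow> l \<in> SO3 \<Longrightarrow> \<tau> (k ** l) = \<tau> k * \<tau> l"
  and tau_rot_x: "\<tau> (rot_x t) = mat_diag (2*\<mu>+1) (\<lambda>s. exp (\<i> * of_int (int s - int \<mu>) * of_real t))"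
  using tau unfolding is_tau_mu_def unitary_mat_def Let_def by auto

lemma tau_half_turn_squared: "\<tau> half_turn_z * \<tau> half_turn_z = 1\<^sub>m (2*\<mu>+1)"
  using tau_mult[OF half_turn_z_SO3 half_turn_z_SO3] by (simp add: half_turn_z_squared tau_rot_x)

text \<open>Conjugating \<open>rot_x t\<close> into \<open>rot_x (-t)\<close> forces \<open>\<tau>\<close> of the half-turn to map the
  weight line \<open>U\<^sub>j\<close> into the line of opposite weight \<open>U\<^bsub>2\<mu>-j\<^esub>\<close>.\<close>
lemma tau_half_turn_antidiagonal:
  assumes i: "i < 2*\<mu>+1" and j: "j < 2*\<mu>+1" and "i + j \<noteq> 2*\<mu>"
  shows "\<tau> half_turn_z $$ (i, j) = 0"
proof (rule exp_ii_fixed_multiplier_eq_0)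
  let ?w = "\<lambda>s t. exp (\<i> * of_int (int s - int \<mu>) * of_real t)"
  let ?W = "\<tau> half_turn_z $$ (i, j)"
  show "(int i - int \<mu>) + (int j - int \<mu>) \<noteq> 0"
    using \<open>i + j \<noteq> 2*\<mu>\<close> by linarith
  fix t
  have "\<tau> half_turn_z * \<tau> (rot_x t) = \<tau> (rot_x (- t)) * \<tau> half_turn_z"
    by (simp add: half_turn_z_rot_x rot_x_SO3 half_turn_z_SO3 flip: tau_mult)
  then have "(\<tau> half_turn_z * \<tau> (rot_x t)) $$ (i, j) = (\<tau> (rot_x (- t)) * \<tau> half_turn_z) $$ (i, j)"
    by simp
  then have intertwined: "?W * ?w j t = ?w i (- t) * ?W"
    using tau_carrier[OF half_turn_z_SO3] i j
    by (simp add: tau_rot_x mat_diag_mult_left mat_diag_mult_right)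
  have "?W * (?w i t * ?w j t) = ?w i t * (?W * ?w j t)"
    by (simp only: ac_simps)
  also have "\<dots> = ?w i t * (?w i (- t) * ?W)"
    by (simp only: intertwined)
  also have "\<dots> = (?w i t * ?w i (- t)) * ?W"
    by (simp only: mult.assoc)
  also have "?w i t * ?w i (- t) = 1"
    by (simp flip: exp_add)
  finally have "?W * (?w i t * ?w j t) = ?W"
    by simp
  then show "?W * exp (\<i> * of_int ((int i - int \<mu>) + (int j - int \<mu>)) * of_real t) = ?W"
    by (simp add: algebra_simps flip: exp_add)
qed

lemma tau_half_turn_antidiagonal_product:
  assumes i: "i < 2*\<mu>+1"
  shows "\<tau> half_turn_z $$ (i, 2*\<mu> - i) * \<tau> half_turn_z $$ (2*\<mu> - i, i) = 1"
proof -
  let ?W = "\<tau> half_turn_z"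
  have W: "?W \<in> carrier_mat (2*\<mu>+1) (2*\<mu>+1)"
    by (rule tau_carrier[OF half_turn_z_SO3])
  have "1 = (?W * ?W) $$ (i, i)"
    using tau_half_turn_squared i by simp
  also have "\<dots> = (\<Sum>k\<in>{0..<2*\<mu>+1}. ?W $$ (i, k) * ?W $$ (k, i))"
    using W i by (simp add: scalar_prod_def)
  also have "\<dots> = (\<Sum>k\<in>{0..<2*\<mu>+1}. if k = 2*\<mu> - i then ?W $$ (i, k) * ?W $$ (k, i) else 0)"
    using i by (intro sum.cong) (auto simp: tau_half_turn_antidiagonal)
  also have "\<dots> = ?W $$ (i, 2*\<mu> - i) * ?W $$ (2*\<mu> - i, i)"
    using i by (simp add: sum.delta')
  finally show ?thesis by simp
qed

lemma tau_half_turn_conj_P_proj: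
  assumes s: "s \<le> 2*\<mu>"
  shows "\<tau> half_turn_z * P_proj \<mu> s * \<tau> half_turn_z = P_proj \<mu> (2*\<mu> - s)"
proof -
  let ?W = "\<tau> half_turn_z"
  have W: "?W \<in> carrier_mat (2*\<mu>+1) (2*\<mu>+1)"
    by (rule tau_carrier[OF half_turn_z_SO3])
  show ?thesis
  proof (rule eq_matI)
    fix i j assume "i < dim_row (P_proj \<mu> (2*\<mu> - s))" "j < dim_col (P_proj \<mu> (2*\<mu> - s))"
    then have i: "i < 2*\<mu>+1" and j: "j < 2*\<mu>+1"
      by (simp_all add: P_proj_def mat_diag_def)
    have "(?W * P_proj \<mu> s * ?W) $$ (i, j)
        = (\<Sum>k\<in>{0..<2*\<mu>+1}. ?W $$ (i, k) * (if k = s then 1 else 0) * ?W $$ (k, j))"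
      using W i j by (simp add: P_proj_def mat_diag_mult_right scalar_prod_def)
    also have "\<dots> = (\<Sum>k\<in>{0..<2*\<mu>+1}. if k = s then ?W $$ (i, k) * ?W $$ (k, j) else 0)"
      by (intro sum.cong) auto
    also have "\<dots> = ?W $$ (i, s) * ?W $$ (s, j)"
      using s by (simp add: sum.delta')
    also have "\<dots> = (if i = 2*\<mu> - s \<and> j = 2*\<mu> - s then 1 else 0)"
      using tau_half_turn_antidiagonal_product[of s] tau_half_turn_antidiagonal[of i s]
        tau_half_turn_antidiagonal[of s j] i j s
      by (cases "i + s = 2*\<mu>"; cases "s + j = 2*\<mu>") (auto simp: mult.commute)
    also have "\<dots> = P_proj \<mu> (2*\<mu> - s) $$ (i, j)"
      using i j by (simp add: P_proj_def mat_diag_def)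
    finally show "(?W * P_proj \<mu> s * ?W) $$ (i, j) = P_proj \<mu> (2*\<mu> - s) $$ (i, j)" .
  qed (use W in \<open>simp_all add: P_proj_def mat_diag_def\<close>)
qed

lemma Phi_integrand_left_half_turn:
  assumes k: "k \<in> SO3" and s: "s \<le> 2*\<mu>"
  shows "exp (\<i> * of_real (\<rho> * (pt_o \<bullet> ((half_turn_z ** k) *v (- y))))) \<cdot>\<^sub>m
           (\<tau> (matrix_inv (half_turn_z ** k)) * P_proj \<mu> s * \<tau> (half_turn_z ** k))
       = exp (\<i> * of_real (\<rho> * (pt_o \<bullet> (k *v y)))) \<cdot>\<^sub>m
           (\<tau> (matrix_inv k) * P_proj \<mu> (2*\<mu> - s) * \<tau> k)"
proof -
  let ?W = "\<tau> half_turn_z"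
  have k': "matrix_inv k \<in> SO3"
    using k by (simp add: SO3_matrix_inv SO3_transpose)
  have "k *v (- y) = - (k *v y)"
    by (metis matrix_vector_mult_scaleR scaleR_minus1_left)
  then have "pt_o \<bullet> ((half_turn_z ** k) *v (- y)) = pt_o \<bullet> (k *v y)"
    by (simp add: matrix_vector_mul_assoc[symmetric] pt_o_half_turn_z)
  moreover have "matrix_inv (half_turn_z ** k) = matrix_inv k ** half_turn_z"
    using k half_turn_z_SO3
    by (simp add: SO3_mult SO3_matrix_inv matrix_transpose_mul transpose_half_turn_z)
  moreover have "P_proj \<mu> s \<in> carrier_mat (2*\<mu>+1) (2*\<mu>+1)"
    by (simp add: P_proj_def)
  then have "\<tau> (matrix_inv k) * ?W * P_proj \<mu> s * (?W * \<tau> k)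
      = \<tau> (matrix_inv k) * (?W * P_proj \<mu> s * ?W) * \<tau> k"
    using tau_carrier[OF k'] tau_carrier[OF half_turn_z_SO3] tau_carrier[OF k]
    by (simp add: assoc_mult_mat[of _ "2*\<mu>+1" "2*\<mu>+1" _ "2*\<mu>+1" _ "2*\<mu>+1"])
  ultimately show ?thesis
    using k k' half_turn_z_SO3 s by (simp add: tau_mult tau_half_turn_conj_P_proj)
qed

lemma Phi_reflect:
  assumes "s \<le> 2*\<mu>"
  shows "Phi \<mu> \<tau> \<rho> (2*\<mu> - s) y = Phi \<mu> \<tau> \<rho> s (- y)"
proof -
  have "haar_SO3 (\<lambda>k. (exp (\<i> * of_real (\<rho> * (pt_o \<bullet> (k *v (- y))))) \<cdot>\<^sub>m
           (\<tau> (matrix_inv k) * P_proj \<mu> s * \<tau> k)) $$ (i, j))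
      = haar_SO3 (\<lambda>k. (exp (\<i> * of_real (\<rho> * (pt_o \<bullet> (k *v y)))) \<cdot>\<^sub>m
           (\<tau> (matrix_inv k) * P_proj \<mu> (2*\<mu> - s) * \<tau> k)) $$ (i, j))" for i j
    by (subst haar_SO3_left_half_turn[symmetric])
      (intro haar_SO3_cong, simp only: Phi_integrand_left_half_turn assms)
  then show ?thesis
    by (simp add: Phi_def haar_SO3_mat_def)
qed

lemma G_sharp_reflect:
  assumes "s \<le> 2*\<mu>"
  shows "G_sharp \<mu> \<tau> H \<rho> (2*\<mu> - s) = G_sharp \<mu> \<tau> (\<lambda>y. H (- y)) \<rho> s"
proof -
  have "(\<integral>y. mtrace (H y * Phi \<mu> \<tau> \<rho> (2*\<mu> - s) (- y)) \<partial>lborel)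
      = (\<integral>y. mtrace (H y * Phi \<mu> \<tau> \<rho> s y) \<partial>lborel)"
    using Phi_reflect[OF assms, of \<rho> "- _"] by simp
  also have "\<dots> = (\<integral>y. mtrace (H (- y) * Phi \<mu> \<tau> \<rho> s (- y)) \<partial>lborel)"
    by (rule lborel_integral_reflect[symmetric])
  finally show ?thesis
    by (simp add: G_sharp_def)
qed

end

theorem corollary4p5:
  fixes \<mu> :: nat and \<tau> :: "real^3^3 \<Rightarrow> complex mat"
  assumes "is_tau_mu \<mu> \<tau>"
  shows "(\<forall>y \<rho> s. \<rho> \<ge> 0 \<longrightarrow> s \<le> 2*\<mu> \<longrightarrow>
            Phi \<mu> \<tau> \<rho> (2*\<mu> - s) y = Phi \<mu> \<tau> \<rho> s (- y))
       \<and> (\<forall>F \<in> schwartz_K \<mu> \<tau>. \<forall>\<rho> s. \<rho> \<ge> 0 \<longrightarrow> s \<le> 2*\<mu> \<longrightarrow>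
            G_sharp \<mu> \<tau> (even_part F) \<rho> s = G_sharp \<mu> \<tau> (even_part F) \<rho> (2*\<mu> - s)
          \<and> G_sharp \<mu> \<tau> (odd_part F) \<rho> s = - G_sharp \<mu> \<tau> (odd_part F) \<rho> (2*\<mu> - s))"
proof (intro conjI allI impI ballI)
  fix y \<rho> s assume "s \<le> 2*\<mu>"
  then show "Phi \<mu> \<tau> \<rho> (2*\<mu> - s) y = Phi \<mu> \<tau> \<rho> s (- y)"
    by (rule Phi_reflect[OF assms])
next
  fix F \<rho> s assume "F \<in> schwartz_K \<mu> \<tau>" and s: "s \<le> 2*\<mu>"
  then have F: "F y \<in> carrier_mat (2*\<mu>+1) (2*\<mu>+1)" for y
    by (simp add: schwartz_K_def)
  have odd_carrier: "odd_part F y \<in> carrier_mat (2*\<mu>+1) (2*\<mu>+1)" for y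
    using F[of "- y"] by (simp add: odd_part_def minus_carrier_mat)
  show "G_sharp \<mu> \<tau> (even_part F) \<rho> s = G_sharp \<mu> \<tau> (even_part F) \<rho> (2*\<mu> - s)"
    using G_sharp_reflect[OF assms s, of "even_part F"] by (simp add: even_part_reflect[OF F])
  have "G_sharp \<mu> \<tau> (odd_part F) \<rho> (2*\<mu> - s) = - G_sharp \<mu> \<tau> (odd_part F) \<rho> s"
    using G_sharp_reflect[OF assms s, of "odd_part F"] G_sharp_smult[OF odd_carrier, where c = "-1"]
    by (simp add: odd_part_reflect[OF F])
  then show "G_sharp \<mu> \<tau> (odd_part F) \<rho> s = - G_sharp \<mu> \<tau> (odd_part F) \<rho> (2*\<mu> - s)"
    by simp
qed

end
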